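(* The monoid variety $\mathbf A_0^1\vee\mathbb M_\lambda(ata^+)$ satisfies an identity $\mathbf u\approx\mathbf v$ if and only if all of the following hold: (a) $\mathrm{simp}(\mathbf u)=\mathrm{simp}(\mathbf v)$ and $\mathrm{mul}(\mathbf u)=\mathrm{mul}(\mathbf v)$; (b) for all letters $x,y$ occurring in $\mathbf u$, the first occurrence of $x$ precedes the last occurrence of $y$ in $\mathbf u$ if and only if the first occurrence of $x$ precedes the last occurrence of $y$ in $\mathbf v$; (c) for every $t\in\mathrm{simp}(\mathbf u)$ and $x\in\mathrm{mul}(\mathbf u)$, the occurrence of $t$ precedes the first occurrence of $x$ in $\mathbf u$ iff it does so in $\mathbf v$, and the occurrence of $t$ precedes the second occurrence of $x$ in $\mathbf u$ iff it does so in $\mathbf v$.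
   Context: Words are elements of the free monoid $\mathfrak A^*$ over a countably infinite alphabet; $\mathrm{simp}(\mathbf w)$ and $\mathrm{mul}(\mathbf w)$ are the sets of letters occurring exactly once, respectively at least twice, in $\mathbf w$. $A_0=\langle e,f\mid e^2=e,\ f^2=f,\ fe=0\rangle=\{e,f,ef,0\}$, $A_0^1$ is $A_0$ with an identity adjoined, and $\mathbf A_0^1$ is the monoid variety it generates. Let $\tau_1$ be the congruence on $\mathfrak A^*$ generated by $a=aa$ for letters $a$; $\mathbf u\,\lambda\,\mathbf v$ iff $\mathbf u\,\tau_1\,\mathbf v$, $\mathrm{mul}(\mathbf u)=\mathrm{mul}(\mathbf v)$, and for each multiple letter its first two occurrences are adjacent in $\mathbf u$ iff adjacent in $\mathbf v$. For $\lambda$-classes, $\mathtt v\le\mathtt u$ iff $\mathtt u=\mathtt p\mathtt v\mathtt s$ in $\mathfrak A^*/\lambda$; for a set $\mathtt W$ of classes, $M_\lambda(\mathtt W)$ is the Rees quotient of $\mathfrak A^*/\lambda$ by the ideal of classes not $\le$ any element of $\mathtt W$, and $\mathbb M_\lambda(\mathtt W)$ the variety it generates. $ata^+$ denotes the $\lambda$-class $\{ata^k:k\ge1\}$. $\vee$ is the join of varieties. *)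

theory Defs
  imports Main
begin

type_synonym word = "nat list"

definition simp_letters :: "word \<Rightarrow> nat set" where
  "simp_letters w = {x. count_list w x = 1}"

definition mul_letters :: "word \<Rightarrow> nat set" where
  "mul_letters w = {x. count_list w x \<ge> 2}"

definition first_occ :: "word \<Rightarrow> nat \<Rightarrow> nat" where
  "first_occ w x = (LEAST i. i < length w \<and> w ! i = x)"

definition second_occ :: "word \<Rightarrow> nat \<Rightarrow> nat" where
  "second_occ w x = (LEAST i. first_occ w x < i \<and> i < length w \<and> w ! i = x)"

definition last_occ :: "word \<Rightarrow> nat \<Rightarrow> nat" where
  "last_occ w x = (GREATEST i. i < length w \<and> w ! i = x)"

definition eval_word :: "('m \<Rightarrow> 'm \<Rightarrow> 'm) \<Rightarrow> 'm \<Rightarrow> (nat \<Rightarrow> 'm) \<Rightarrow> word \<Rightarrow> 'm" where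
  "eval_word mult one \<phi> w = foldr (\<lambda>a acc. mult (\<phi> a) acc) w one"

definition monoid_satisfies ::
  "'m set \<Rightarrow> ('m \<Rightarrow> 'm \<Rightarrow> 'm) \<Rightarrow> 'm \<Rightarrow> word \<Rightarrow> word \<Rightarrow> bool" where
  "monoid_satisfies C mult one u v \<longleftrightarrow>
     (\<forall>\<phi>. range \<phi> \<subseteq> C \<longrightarrow> eval_word mult one \<phi> u = eval_word mult one \<phi> v)"

datatype A01 = One | E | F | EF | Z

fun a01_mult :: "A01 \<Rightarrow> A01 \<Rightarrow> A01" where
  "a01_mult One y = y"
| "a01_mult x One = x"
| "a01_mult Z y = Z"
| "a01_mult x Z = Z"
| "a01_mult E E = E"
| "a01_mult E F = EF"
| "a01_mult E EF = EF"
| "a01_mult F E = Z"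
| "a01_mult F F = F"
| "a01_mult F EF = Z"
| "a01_mult EF E = Z"
| "a01_mult EF F = EF"
| "a01_mult EF EF = Z"

inductive tau1 :: "word \<Rightarrow> word \<Rightarrow> bool" where
  refl: "tau1 w w"
| dup: "tau1 (p @ [a] @ s) (p @ [a, a] @ s)"
| sym: "tau1 u v \<Longrightarrow> tau1 v u"
| trans: "tau1 u v \<Longrightarrow> tau1 v w \<Longrightarrow> tau1 u w"

definition first_two_adjacent :: "word \<Rightarrow> nat \<Rightarrow> bool" where
  "first_two_adjacent w x \<longleftrightarrow> (\<exists>p s. w = p @ [x, x] @ s \<and> x \<notin> set p)"

definition lam :: "word \<Rightarrow> word \<Rightarrow> bool" where
  "lam u v \<longleftrightarrow> tau1 u v \<and> mul_letters u = mul_letters v \<and>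
     (\<forall>x\<in>mul_letters u. first_two_adjacent u x \<longleftrightarrow> first_two_adjacent v x)"

definition lclass :: "word \<Rightarrow> word set" where
  "lclass w = {w'. lam w w'}"

text \<open>[v] \<le> [u] iff [u] = [p][v][s] in the quotient A*/lambda (lambda is a congruence).\<close>
definition lfactor :: "word \<Rightarrow> word \<Rightarrow> bool" where
  "lfactor v u \<longleftrightarrow> (\<exists>p s. lam u (p @ v @ s))"

text \<open>M_lambda(W) for a set W of representatives of lambda-classes: nonzero elements
  are (Some) lambda-classes below some element of W; None is the zero.\<close>
definition Mlam_carrier :: "word set \<Rightarrow> word set option set" where
  "Mlam_carrier W = insert None (Some ` {lclass w | w. \<exists>w0\<in>W. lfactor w w0})"

fun Mlam_mult :: "word set \<Rightarrow> word set option \<Rightarrow> word set option \<Rightarrow> word set option" where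
  "Mlam_mult W (Some X) (Some Y) =
     (let w = (SOME x. x \<in> X) @ (SOME y. y \<in> Y)
      in if \<exists>w0\<in>W. lfactor w w0 then Some (lclass w) else None)"
| "Mlam_mult W _ _ = None"

definition Mlam_one :: "word set option" where
  "Mlam_one = Some (lclass [])"

text \<open>The lambda-class ata^+ (a = 0, t = 1).\<close>
definition ata_word :: word where
  "ata_word = [0, 1, 0]"

text \<open>Identities of a join of varieties are those holding in both (Birkhoff).\<close>
definition join_A01_Mata_satisfies :: "word \<Rightarrow> word \<Rightarrow> bool" where
  "join_A01_Mata_satisfies u v \<longleftrightarrow>
     monoid_satisfies UNIV a01_mult One u v \<and>
     monoid_satisfies (Mlam_carrier {ata_word}) (Mlam_mult {ata_word}) Mlam_one u v"

end

theory Submission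
  imports Defs
begin

(* In A_0^1 a word evaluates to 0 exactly when a letter sent to f occurs before a letter sent
   to e, so A_0^1 detects precisely the content and condition (b).
   M_lambda(ata^+) is isomorphic to the nine-element monoid {1, a, a^2, t, at, ta, ta^2, ata, 0}.
   There a word evaluates to 0 as soon as two occurrences are sent to elements containing t;
   without such occurrences its value is a power of a fixed by the letter counts capped at 2;
   with exactly one, of a simple letter t, the value is a^i x a^j, which depends only on
   min(i,2), min(i+j,2) and whether j = 0.  These are fixed by (a), by the capped counts of the
   prefix before t (conditions (b) and (c)) and by the content of the suffix after t
   (condition (b)); conversely, suitable assignments into both monoids recover (a)-(c). *)

subsection \<open>Occurrences of letters\<close>

lemma first_occ_nth:
  "x \<in> set w \<Longrightarrow> first_occ w x < length w \<and> w ! first_occ w x = x"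
  unfolding first_occ_def by (rule LeastI_ex) (metis in_set_conv_nth)

lemma first_occ_le: "i < length w \<Longrightarrow> w ! i = x \<Longrightarrow> first_occ w x \<le> i"
  unfolding first_occ_def by (rule Least_le) simp

lemma last_occ_nth:
  "x \<in> set w \<Longrightarrow> last_occ w x < length w \<and> w ! last_occ w x = x"
  unfolding last_occ_def
  by (rule GreatestI_ex_nat[where b = "length w"]) (auto simp: in_set_conv_nth)

lemma last_occ_ge: "i < length w \<Longrightarrow> w ! i = x \<Longrightarrow> i \<le> last_occ w x"
  unfolding last_occ_def by (rule Greatest_le_nat[where b = "length w"]) auto

definition occurs_before :: "(nat \<Rightarrow> bool) \<Rightarrow> (nat \<Rightarrow> bool) \<Rightarrow> word \<Rightarrow> bool" where
  "occurs_before P Q w \<longleftrightarrow> (\<exists>i j. i < j \<and> j < length w \<and> P (w ! i) \<and> Q (w ! j))"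

lemma occurs_before_Nil [simp]: "\<not> occurs_before P Q []"
  unfolding occurs_before_def by simp

lemma occurs_before_mono:
  "occurs_before P Q w \<Longrightarrow> (\<And>x. P x \<Longrightarrow> P' x) \<Longrightarrow> (\<And>x. Q x \<Longrightarrow> Q' x) \<Longrightarrow> occurs_before P' Q' w"
  unfolding occurs_before_def by blast

lemma occurs_before_Cons:
  "occurs_before P Q (a # w) \<longleftrightarrow> (P a \<and> (\<exists>x\<in>set w. Q x)) \<or> occurs_before P Q w"
proof
  assume "occurs_before P Q (a # w)"
  then obtain i j where ij: "i < j" "j < Suc (length w)" "P ((a # w) ! i)" "Q ((a # w) ! j)"
    unfolding occurs_before_def by auto
  then obtain j' where j: "j = Suc j'" by (cases j) auto
  show "(P a \<and> (\<exists>x\<in>set w. Q x)) \<or> occurs_before P Q w"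
  proof (cases i)
    case 0
    then show ?thesis using ij j by (auto intro: nth_mem)
  next
    case (Suc i')
    then show ?thesis using ij j unfolding occurs_before_def by auto
  qed
next
  assume "(P a \<and> (\<exists>x\<in>set w. Q x)) \<or> occurs_before P Q w"
  then show "occurs_before P Q (a # w)"
  proof
    assume "P a \<and> (\<exists>x\<in>set w. Q x)"
    then obtain j where "j < length w" "Q (w ! j)" "P a" by (metis in_set_conv_nth)
    then show ?thesis unfolding occurs_before_def by (intro exI[of _ 0] exI[of _ "Suc j"]) auto
  next
    assume "occurs_before P Q w"
    then obtain i j where "i < j" "j < length w" "P (w ! i)" "Q (w ! j)"
      unfolding occurs_before_def by blast
    then show ?thesis
      unfolding occurs_before_def by (intro exI[of _ "Suc i"] exI[of _ "Suc j"]) auto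
  qed
qed

lemma two_le_count_list_iff: "2 \<le> count_list w x \<longleftrightarrow> occurs_before (\<lambda>y. y = x) (\<lambda>y. y = x) w"
proof (induction w)
  case (Cons a w)
  have "1 \<le> count_list w x \<longleftrightarrow> x \<in> set w" by (metis count_list_0_iff less_one not_le)
  then show ?case using Cons by (auto simp: occurs_before_Cons)
qed simp

lemma occurs_before_iff_first_last_occ:
  "occurs_before P Q w \<longleftrightarrow>
     (\<exists>y\<in>set w. \<exists>x\<in>set w. P y \<and> Q x \<and> first_occ w y < last_occ w x)"
proof
  assume "occurs_before P Q w"
  then obtain i j where ij: "i < j" "j < length w" "P (w ! i)" "Q (w ! j)"
    unfolding occurs_before_def by blast
  have "first_occ w (w ! i) \<le> i" "j \<le> last_occ w (w ! j)"
    using ij first_occ_le[of i w] last_occ_ge[of j w] by simp_all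
  with ij show "\<exists>y\<in>set w. \<exists>x\<in>set w. P y \<and> Q x \<and> first_occ w y < last_occ w x"
    by (intro bexI[of _ "w ! i"] bexI[of _ "w ! j"]) auto
next
  assume "\<exists>y\<in>set w. \<exists>x\<in>set w. P y \<and> Q x \<and> first_occ w y < last_occ w x"
  then obtain x y where "y \<in> set w" "x \<in> set w" "P y" "Q x" "first_occ w y < last_occ w x"
    by blast
  with first_occ_nth[of y w] last_occ_nth[of x w] show "occurs_before P Q w"
    unfolding occurs_before_def by (intro exI[of _ "first_occ w y"] exI[of _ "last_occ w x"]) auto
qed

lemma occurs_before_eq_if_order_eq:
  assumes "set u = set v"
    and "\<forall>x\<in>set u. \<forall>y\<in>set u. first_occ u x < last_occ u y \<longleftrightarrow> first_occ v x < last_occ v y"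
  shows "occurs_before P Q u \<longleftrightarrow> occurs_before P Q v"
  using assms unfolding occurs_before_iff_first_last_occ by auto

lemma occurs_before_distinct:
  assumes "x \<in> set w" "y \<in> set w" "x \<noteq> y" "P x" "P y"
  shows "occurs_before P P w"
proof -
  have "first_occ w x \<noteq> first_occ w y" using first_occ_nth assms(1-3) by metis
  then show ?thesis
    using first_occ_nth[OF assms(1)] first_occ_nth[OF assms(2)] assms(4,5)
    unfolding occurs_before_def by (metis linorder_neqE_nat)
qed

lemma second_occ_nth:
  assumes "2 \<le> count_list w x"
  shows "first_occ w x < second_occ w x \<and> second_occ w x < length w \<and> w ! second_occ w x = x"
proof -
  obtain i j where ij: "i < j" "j < length w" "w ! i = x" "w ! j = x"
    using assms two_le_count_list_iff unfolding occurs_before_def by blast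
  then have "first_occ w x < j \<and> j < length w \<and> w ! j = x"
    using first_occ_le[of i w x] by simp
  then show ?thesis unfolding second_occ_def by (rule LeastI)
qed

lemma second_occ_le: "first_occ w x < i \<Longrightarrow> i < length w \<Longrightarrow> w ! i = x \<Longrightarrow> second_occ w x \<le> i"
  unfolding second_occ_def by (rule Least_le) simp

lemma last_occ_eq_first_occ:
  assumes "count_list w x = 1"
  shows "last_occ w x = first_occ w x"
proof (rule ccontr)
  assume "last_occ w x \<noteq> first_occ w x"
  moreover have x: "x \<in> set w" using assms by (metis count_notin zero_neq_one)
  ultimately have "first_occ w x < last_occ w x"
    using first_occ_nth last_occ_ge by (metis le_neq_implies_less)
  then have "occurs_before (\<lambda>y. y = x) (\<lambda>y. y = x) w"
    unfolding occurs_before_def using first_occ_nth[OF x] last_occ_nth[OF x] by blast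
  then have "2 \<le> count_list w x" using two_le_count_list_iff by blast
  with assms show False by simp
qed

lemma in_set_take_iff_first_occ:
  assumes "x \<in> set w"
  shows "x \<in> set (take n w) \<longleftrightarrow> first_occ w x < n"
proof
  assume "x \<in> set (take n w)"
  then obtain i where "i < length (take n w)" "take n w ! i = x" by (metis in_set_conv_nth)
  then show "first_occ w x < n" using first_occ_le[of i w x] by auto
next
  assume "first_occ w x < n"
  then show "x \<in> set (take n w)" using first_occ_nth[OF assms]
    by (metis in_set_conv_nth length_take min_less_iff_conj nth_take)
qed

lemma two_le_count_take_iff_second_occ:
  assumes "2 \<le> count_list w x"
  shows "2 \<le> count_list (take n w) x \<longleftrightarrow> second_occ w x < n"
proof
  assume "2 \<le> count_list (take n w) x"
  then obtain i j where ij: "i < j" "j < length (take n w)" "take n w ! i = x" "take n w ! j = x"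
    using two_le_count_list_iff unfolding occurs_before_def by blast
  then have "first_occ w x < j" using first_occ_le[of i w x] by simp
  then have "second_occ w x \<le> j" using second_occ_le[of w x j] ij by simp
  then show "second_occ w x < n" using ij by simp
next
  assume "second_occ w x < n"
  moreover have "x \<in> set w" using assms by (metis count_notin not_numeral_le_zero)
  ultimately have "occurs_before (\<lambda>y. y = x) (\<lambda>y. y = x) (take n w)"
    unfolding occurs_before_def using second_occ_nth[OF assms] first_occ_nth
    by (intro exI[of _ "first_occ w x"] exI[of _ "second_occ w x"]) auto
  then show "2 \<le> count_list (take n w) x" using two_le_count_list_iff by blast
qed

lemma in_set_drop_iff_last_occ:
  assumes "x \<in> set w"
  shows "x \<in> set (drop n w) \<longleftrightarrow> n \<le> last_occ w x"
proof
  assume "x \<in> set (drop n w)"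
  then obtain i where "i < length (drop n w)" "drop n w ! i = x" by (metis in_set_conv_nth)
  then have "n + i < length w" "w ! (n + i) = x" by auto
  then show "n \<le> last_occ w x" using last_occ_ge by fastforce
next
  assume "n \<le> last_occ w x"
  then have "drop n w ! (last_occ w x - n) = x" "last_occ w x - n < length (drop n w)"
    using last_occ_nth[OF assms] by auto
  then show "x \<in> set (drop n w)" by (metis nth_mem)
qed

lemma first_occ_append_Cons:
  assumes "t \<notin> set w1"
  shows "first_occ (w1 @ t # w2) t = length w1"
proof -
  let ?w = "w1 @ t # w2"
  have le: "first_occ ?w t \<le> length w1" using first_occ_le[of "length w1" ?w t] by simp
  have "?w ! first_occ ?w t = t" using first_occ_nth[of t ?w] by simp
  then have "\<not> first_occ ?w t < length w1" using assms by (auto simp: nth_append) (metis nth_mem)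
  with le show ?thesis by simp
qed

lemma split_at_simple_letter:
  assumes "count_list w t = 1"
  obtains w1 w2 where "w = w1 @ t # w2" "t \<notin> set w1" "t \<notin> set w2"
proof -
  have "t \<in> set w" using assms by (metis count_notin zero_neq_one)
  then obtain w1 w2 where w: "w = w1 @ t # w2" "t \<notin> set w1" by (meson split_list_first)
  then have "count_list w2 t = 0" using assms by simp
  with w that show ?thesis by (simp add: count_list_0_iff)
qed

lemma count_prefix_eq_0_iff:
  assumes "w = w1 @ t # w2" "t \<notin> set w1" "y \<in> set w" "y \<noteq> t"
  shows "count_list w1 y = 0 \<longleftrightarrow> first_occ w t < first_occ w y"
proof -
  have t: "first_occ w t = length w1" "take (length w1) w = w1" "w ! length w1 = t"
    using assms(1,2) first_occ_append_Cons by auto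
  then have "first_occ w y \<noteq> length w1" using first_occ_nth[OF assms(3)] assms(4) by metis
  moreover have "count_list w1 y = 0 \<longleftrightarrow> \<not> first_occ w y < length w1"
    using in_set_take_iff_first_occ[OF assms(3), of "length w1"] t(2) count_list_0_iff by metis
  ultimately show ?thesis using t(1) by auto
qed

lemma two_le_count_prefix_iff:
  assumes "w = w1 @ t # w2" "t \<notin> set w1" "2 \<le> count_list w y" "y \<noteq> t"
  shows "2 \<le> count_list w1 y \<longleftrightarrow> \<not> first_occ w t < second_occ w y"
proof -
  have t: "first_occ w t = length w1" "take (length w1) w = w1" "w ! length w1 = t"
    using assms(1,2) first_occ_append_Cons by auto
  then have "second_occ w y \<noteq> length w1" using second_occ_nth[OF assms(3)] assms(4) by metis
  moreover have "2 \<le> count_list w1 y \<longleftrightarrow> second_occ w y < length w1"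
    using two_le_count_take_iff_second_occ[OF assms(3), of "length w1"] t(2) by metis
  ultimately show ?thesis using t(1) by auto
qed

lemma in_set_suffix_iff:
  assumes "w = w1 @ t # w2" "t \<notin> set w1" "y \<in> set w"
  shows "y \<in> set w2 \<longleftrightarrow> first_occ w t < last_occ w y"
proof -
  have "drop (Suc (length w1)) w = w2" "first_occ w t = length w1"
    using assms(1,2) first_occ_append_Cons by auto
  then show ?thesis using in_set_drop_iff_last_occ[OF assms(3), of "Suc (length w1)"] by auto
qed

subsection \<open>Letter counts capped at two\<close>

lemma count_list_replicate [simp]: "count_list (replicate n a) x = (if x = a then n else 0)"
  by (induction n) auto

lemma min2_eq_iff: "min 2 a = min 2 (b::nat) \<longleftrightarrow> (a = 1 \<longleftrightarrow> b = 1) \<and> (2 \<le> a \<longleftrightarrow> 2 \<le> b)"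
  by (auto simp: min_def)

lemma simp_mul_letters_eq_iff:
  "simp_letters u = simp_letters v \<and> mul_letters u = mul_letters v \<longleftrightarrow>
     (\<forall>x. min 2 (count_list u x) = min 2 (count_list v x))"
  unfolding min2_eq_iff simp_letters_def mul_letters_def by auto

lemma set_eq_if_capped_counts_eq:
  "\<forall>x. min 2 (count_list u x) = min 2 (count_list v x) \<Longrightarrow> set u = set v"
  by (metis count_list_0_iff min_0R min_def zero_neq_numeral subsetI subset_antisym)

lemma min2_mult_cong:
  assumes "min 2 c = min 2 d"
  shows "min 2 (c * g) = min 2 (d * (g::nat))"
proof (cases "2 \<le> c \<and> 0 < g")
  case True
  then have "2 \<le> d" using assms by (auto simp: min_def split: if_splits)
  moreover have "c \<le> c * g" "d \<le> d * g" using True by simp_all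
  ultimately have "2 \<le> c * g" "2 \<le> d * g" using True by linarith+
  then show ?thesis by simp
next
  case False
  with assms show ?thesis by (auto simp: min_def split: if_splits)
qed

lemma min2_sum_cong:
  "finite S \<Longrightarrow> \<forall>x\<in>S. min 2 (f x) = min 2 (g x) \<Longrightarrow> min 2 (sum f S) = min 2 (sum g S :: nat)"
proof (induction S rule: finite_induct)
  case (insert a S)
  then have "min 2 (sum f S) = min 2 (sum g S)" "min 2 (f a) = min 2 (g a)" by auto
  moreover have "min 2 (m + n) = min 2 (min 2 m + min 2 n)" for m n :: nat by simp
  ultimately show ?case using insert(1,2) by (metis sum.insert)
qed simp

lemma min2_sum_list_cong:
  assumes "\<forall>x. min 2 (count_list w1 x) = min 2 (count_list w2 x)"
  shows "min 2 (sum_list (map g w1)) = min 2 (sum_list (map g w2) :: nat)"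
  unfolding sum_list_map_eq_sum_count set_eq_if_capped_counts_eq[OF assms]
  by (rule min2_sum_cong) (auto intro: min2_mult_cong assms[rule_format])

lemma eval_word_Nil [simp]: "eval_word mult one \<phi> [] = one"
  and eval_word_Cons [simp]: "eval_word mult one \<phi> (a # w) = mult (\<phi> a) (eval_word mult one \<phi> w)"
  unfolding eval_word_def by simp_all

lemma eval_word_append:
  assumes "\<And>x y z. mult (mult x y) z = mult x (mult y z)" and "\<And>x. mult one x = x"
  shows "eval_word mult one \<phi> (w1 @ w2) = mult (eval_word mult one \<phi> w1) (eval_word mult one \<phi> w2)"
  by (induction w1) (simp_all add: assms)

lemma eval_word_cong: "\<forall>x\<in>set w. \<phi> x = \<psi> x \<Longrightarrow> eval_word mult one \<phi> w = eval_word mult one \<psi> w"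
  by (induction w) simp_all

lemma monoid_satisfies_iff_isomorphic:
  assumes mult: "\<And>X Y. X \<in> C \<Longrightarrow> Y \<in> C \<Longrightarrow> mult X Y \<in> C \<and> h (mult X Y) = mult' (h X) (h Y)"
    and one: "one \<in> C" "h one = one'"
    and bij: "bij_betw h C UNIV"
  shows "monoid_satisfies C mult one u v \<longleftrightarrow>
    (\<forall>\<psi>. eval_word mult' one' \<psi> u = eval_word mult' one' \<psi> v)"
proof -
  have eval: "eval_word mult one \<phi> w \<in> C \<and>
      h (eval_word mult one \<phi> w) = eval_word mult' one' (h \<circ> \<phi>) w"
    if "range \<phi> \<subseteq> C" for \<phi> w
  proof (induction w)
    case (Cons a w)
    have "\<phi> a \<in> C" using that by auto
    with Cons mult show ?case by simp
  qed (simp add: one)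
  show ?thesis
  proof
    assume sat: "monoid_satisfies C mult one u v"
    show "\<forall>\<psi>. eval_word mult' one' \<psi> u = eval_word mult' one' \<psi> v"
    proof
      fix \<psi> :: "nat \<Rightarrow> 'b"
      let ?\<phi> = "inv_into C h \<circ> \<psi>"
      have "range ?\<phi> \<subseteq> C" "h \<circ> ?\<phi> = \<psi>"
        using bij by (auto simp: bij_betw_def inv_into_into f_inv_into_f)
      then show "eval_word mult' one' \<psi> u = eval_word mult' one' \<psi> v"
        using sat eval unfolding monoid_satisfies_def by metis
    qed
  next
    assume "\<forall>\<psi>. eval_word mult' one' \<psi> u = eval_word mult' one' \<psi> v"
    then show "monoid_satisfies C mult one u v"
      unfolding monoid_satisfies_def using eval bij_betw_imp_inj_on[OF bij] by (metis inj_onD)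
  qed
qed

subsection \<open>Identities of \<open>A\<^sub>0\<^sup>1\<close>\<close>

lemma eval_word_A01:
  "eval_word a01_mult One \<phi> w =
    (if (\<exists>x\<in>set w. \<phi> x = Z) \<or> occurs_before (\<lambda>x. \<phi> x \<in> {F, EF}) (\<lambda>x. \<phi> x \<in> {E, EF}) w then Z
     else if \<exists>x\<in>set w. \<phi> x \<in> {E, EF} then (if \<exists>x\<in>set w. \<phi> x \<in> {F, EF} then EF else E)
     else if \<exists>x\<in>set w. \<phi> x \<in> {F, EF} then F else One)"
proof (induction w)
  case (Cons a w)
  show ?case unfolding eval_word_Cons Cons occurs_before_Cons by (cases "\<phi> a") auto
qed simp

theorem A01_satisfies_iff:
  "monoid_satisfies UNIV a01_mult One u v \<longleftrightarrow>
     set u = set v \<and>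
     (\<forall>x\<in>set u. \<forall>y\<in>set u. first_occ u x < last_occ u y \<longleftrightarrow> first_occ v x < last_occ v y)"
  (is "?sat \<longleftrightarrow> ?content \<and> ?order")
proof
  assume sat: ?sat
  then have eq: "eval_word a01_mult One \<phi> u = eval_word a01_mult One \<phi> v" for \<phi>
    unfolding monoid_satisfies_def by simp
  have "x \<in> set u \<longleftrightarrow> x \<in> set v" for x
    using eq[of "\<lambda>z. if z = x then E else One"]
    by (auto simp: eval_word_A01 occurs_before_def split: if_splits)
  then show "?content \<and> ?order"
  proof (intro conjI ballI)
    fix x y assume xy: "x \<in> set u" "y \<in> set u" and set: "\<And>x. x \<in> set u \<longleftrightarrow> x \<in> set v"
    define \<phi> where
      "\<phi> z = (if z = x \<and> z = y then EF else if z = y then E else if z = x then F else One)" for z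
    have zero_iff: "eval_word a01_mult One \<phi> w = Z \<longleftrightarrow> first_occ w x < last_occ w y"
      if "x \<in> set w" "y \<in> set w" for w
    proof -
      have "(\<lambda>z. \<phi> z \<in> {F, EF}) = (\<lambda>z. z = x)" "(\<lambda>z. \<phi> z \<in> {E, EF}) = (\<lambda>z. z = y)"
        "\<forall>z. \<phi> z \<noteq> Z"
        unfolding \<phi>_def by auto
      then show ?thesis using that by (simp add: eval_word_A01 occurs_before_iff_first_last_occ)
    qed
    show "first_occ u x < last_occ u y \<longleftrightarrow> first_occ v x < last_occ v y"
      using zero_iff[of u] zero_iff[of v] eq[of \<phi>] xy set by simp
  qed auto
next
  assume "?content \<and> ?order"
  then have "occurs_before P Q u \<longleftrightarrow> occurs_before P Q v" for P Q
    using occurs_before_eq_if_order_eq by blast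
  with \<open>?content \<and> ?order\<close> show ?sat
    unfolding monoid_satisfies_def by (simp add: eval_word_A01)
qed

subsection \<open>A nine-element model of \<open>M\<^sub>\<lambda>(ata\<^sup>+)\<close>\<close>

text \<open>The constructors name the nonzero \<open>\<lambda>\<close>-classes below \<open>ata\<^sup>+\<close>:
  \<open>N1 = 1\<close>, \<open>NA = a\<close>, \<open>NA2 = a\<^sup>2\<^sup>+\<close>, \<open>NT = t\<close>, \<open>NAT = at\<close>, \<open>NTA = ta\<close>, \<open>NTA2 = ta\<^sup>2\<^sup>+\<close>,
  \<open>NATA = ata\<^sup>+\<close>; \<open>NZ\<close> is the zero.\<close>

datatype ata_elem = N1 | NA | NA2 | NT | NAT | NTA | NTA2 | NATA | NZ

fun ata_mult :: "ata_elem \<Rightarrow> ata_elem \<Rightarrow> ata_elem" where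
  "ata_mult N1 y = y"
| "ata_mult x N1 = x"
| "ata_mult NA NA = NA2" | "ata_mult NA NA2 = NA2"
| "ata_mult NA NT = NAT" | "ata_mult NA NTA = NATA" | "ata_mult NA NTA2 = NATA"
| "ata_mult NA2 NA = NA2" | "ata_mult NA2 NA2 = NA2"
| "ata_mult NT NA = NTA" | "ata_mult NT NA2 = NTA2"
| "ata_mult NAT NA = NATA" | "ata_mult NAT NA2 = NATA"
| "ata_mult NTA NA = NTA2" | "ata_mult NTA NA2 = NTA2"
| "ata_mult NTA2 NA = NTA2" | "ata_mult NTA2 NA2 = NTA2"
| "ata_mult NATA NA = NATA" | "ata_mult NATA NA2 = NATA"
| "ata_mult _ _ = NZ"

abbreviation ata_eval :: "(nat \<Rightarrow> ata_elem) \<Rightarrow> word \<Rightarrow> ata_elem" where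
  "ata_eval \<psi> w \<equiv> eval_word ata_mult N1 \<psi> w"

definition a_power :: "nat \<Rightarrow> ata_elem" where
  "a_power k = (if k = 0 then N1 else if k = 1 then NA else NA2)"

fun a_exponent :: "ata_elem \<Rightarrow> nat" where
  "a_exponent NA = 1" | "a_exponent NA2 = 2" | "a_exponent _ = 0"

definition contains_t :: "ata_elem \<Rightarrow> bool" where
  "contains_t x \<longleftrightarrow> x \<in> {NT, NAT, NTA, NTA2, NATA}"

lemma ata_mult_assoc: "ata_mult (ata_mult x y) z = ata_mult x (ata_mult y z)"
  by (cases x; cases y; cases z) simp_all

lemma ata_mult_N1_right [simp]: "ata_mult x N1 = x"
  and ata_mult_NZ_left [simp]: "ata_mult NZ x = NZ"
  and ata_mult_NZ_right [simp]: "ata_mult x NZ = NZ"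
  by (cases x; simp)+

lemma ata_eval_append: "ata_eval \<psi> (w1 @ w2) = ata_mult (ata_eval \<psi> w1) (ata_eval \<psi> w2)"
  by (rule eval_word_append) (simp_all add: ata_mult_assoc)

lemma a_power_eq_iff: "a_power i = a_power j \<longleftrightarrow> min 2 i = min 2 j"
  by (auto simp: a_power_def min_def)

lemma ata_eval_NZ: "x \<in> set w \<Longrightarrow> \<psi> x = NZ \<Longrightarrow> ata_eval \<psi> w = NZ"
  by (induction w) auto

lemma ata_eval_without_t:
  "\<forall>x\<in>set w. \<not> contains_t (\<psi> x) \<and> \<psi> x \<noteq> NZ \<Longrightarrow> ata_eval \<psi> w = a_power (\<Sum>x\<leftarrow>w. a_exponent (\<psi> x))"
proof (induction w)
  case (Cons a w)
  then show ?case by (cases "\<psi> a") (auto simp: a_power_def contains_t_def)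
qed (simp add: a_power_def)

lemma ata_eval_without_t_cong:
  assumes "\<forall>x\<in>set w1. \<not> contains_t (\<psi> x) \<and> \<psi> x \<noteq> NZ"
    and "\<forall>x. min 2 (count_list w1 x) = min 2 (count_list w2 x)"
  shows "ata_eval \<psi> w1 = ata_eval \<psi> w2"
  using assms ata_eval_without_t[of w1] ata_eval_without_t[of w2] min2_sum_list_cong[OF assms(2)]
    set_eq_if_capped_counts_eq[OF assms(2)]
  by (simp add: a_power_eq_iff)

lemma contains_t_ata_mult:
  "contains_t x \<or> contains_t y \<Longrightarrow> contains_t (ata_mult x y) \<or> ata_mult x y = NZ"
  by (cases x; cases y) (simp_all add: contains_t_def)

lemma ata_eval_contains_t:
  "\<exists>x\<in>set w. contains_t (\<psi> x) \<Longrightarrow> contains_t (ata_eval \<psi> w) \<or> ata_eval \<psi> w = NZ"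
proof (induction w)
  case (Cons a w)
  show ?case
  proof (cases "contains_t (\<psi> a)")
    case False
    with Cons have "contains_t (ata_eval \<psi> w) \<or> ata_eval \<psi> w = NZ" by simp
    then show ?thesis using contains_t_ata_mult by auto
  qed (simp add: contains_t_ata_mult)
qed simp

lemma ata_eval_two_t:
  "occurs_before (\<lambda>x. contains_t (\<psi> x)) (\<lambda>x. contains_t (\<psi> x)) w \<Longrightarrow> ata_eval \<psi> w = NZ"
proof (induction w)
  case (Cons a w)
  show ?case
  proof (cases "occurs_before (\<lambda>x. contains_t (\<psi> x)) (\<lambda>x. contains_t (\<psi> x)) w")
    case False
    with Cons.prems have "contains_t (\<psi> a)" "\<exists>x\<in>set w. contains_t (\<psi> x)"
      by (auto simp: occurs_before_Cons)
    then show ?thesis using ata_eval_contains_t[of w \<psi>]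
      by (cases "\<psi> a"; cases "ata_eval \<psi> w") (auto simp: contains_t_def)
  qed (simp add: Cons.IH)
qed simp

lemma ata_mult_sandwich_cong:
  assumes "contains_t x" "min 2 i = min 2 i'" "min 2 (i + j) = min 2 (i' + j')" "j = 0 \<longleftrightarrow> j' = 0"
  shows "ata_mult (a_power i) (ata_mult x (a_power j)) =
    ata_mult (a_power i') (ata_mult x (a_power j'))"
proof -
  have "a_power i' = a_power i" using assms(2) by (simp add: a_power_eq_iff)
  moreover have "ata_mult (a_power i) (ata_mult x (a_power j)) =
      ata_mult (a_power i) (ata_mult x (a_power j'))"
  proof (cases "i = 0")
    case True
    then have "i' = 0" using assms(2) by (simp add: min_def split: if_splits)
    with True assms(3) have "a_power j = a_power j'" by (simp add: a_power_eq_iff)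
    then show ?thesis by simp
  next
    case False
    \<comment> \<open>\<open>a x a = a x a\<^sup>2\<close> for every \<open>x\<close> containing \<open>t\<close>, and \<open>a\<^sup>2 x = 0\<close>\<close>
    with assms(1,4) show ?thesis
      by (cases x; cases "j = 0"; cases "j' = 0") (auto simp: a_power_def contains_t_def)
  qed
  ultimately show ?thesis by simp
qed

subsection \<open>The \<open>\<lambda>\<close>-classes below \<open>ata\<^sup>+\<close>\<close>

lemma tau1_set_hd: "tau1 u v \<Longrightarrow> set u = set v \<and> hd u = hd v"
proof (induction rule: tau1.induct)
  case (dup p a s)
  then show ?case by (cases p) auto
qed auto

lemma tau1_replicate: "tau1 (p @ replicate (Suc i) a @ s) (p @ replicate (Suc j) a @ s)"
proof -
  have "tau1 (p @ [a] @ s) (p @ replicate (Suc j) a @ s)" for j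
  proof (induction j)
    case (Suc j)
    have "tau1 ((p @ replicate j a) @ [a] @ s) ((p @ replicate j a) @ [a, a] @ s)"
      by (rule tau1.dup)
    then have "tau1 (p @ replicate (Suc j) a @ s) (p @ replicate (Suc (Suc j)) a @ s)"
      by (simp add: replicate_app_Cons_same)
    with Suc show ?case by (rule tau1.trans)
  qed (simp add: tau1.refl)
  then show ?thesis by (meson tau1.sym tau1.trans)
qed

lemma lam_refl: "lam u u"
  unfolding lam_def by (simp add: tau1.refl)

lemma lam_sym: "lam u v \<Longrightarrow> lam v u"
  unfolding lam_def by (auto intro: tau1.sym)

lemma lam_trans: "lam u v \<Longrightarrow> lam v w \<Longrightarrow> lam u w"
  unfolding lam_def by (auto intro: tau1.trans)

lemma lclass_eq_iff: "lclass u = lclass v \<longleftrightarrow> lam u v"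
  unfolding lclass_def using lam_refl lam_sym lam_trans by blast

lemma lam_capped_counts:
  assumes "lam u v"
  shows "min 2 (count_list u x) = min 2 (count_list v x)"
proof -
  have "set u = set v" "mul_letters u = mul_letters v"
    using assms tau1_set_hd unfolding lam_def by auto
  then have "count_list u x = 0 \<longleftrightarrow> count_list v x = 0" "2 \<le> count_list u x \<longleftrightarrow> 2 \<le> count_list v x"
    unfolding mul_letters_def by (auto simp: count_list_0_iff)
  then show ?thesis unfolding min2_eq_iff by linarith
qed

lemma first_two_adjacent_append_Cons:
  assumes "x \<notin> set p"
  shows "first_two_adjacent (p @ x # s) x \<longleftrightarrow> (\<exists>s'. s = x # s')"
proof
  assume "first_two_adjacent (p @ x # s) x"
  then obtain p' s' where "p @ x # s = p' @ x # x # s'" "x \<notin> set p'"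
    unfolding first_two_adjacent_def by auto
  moreover from this assms have "length p = length p'"
    using first_occ_append_Cons by metis
  ultimately show "\<exists>s'. s = x # s'" by auto
qed (use assms in \<open>auto simp: first_two_adjacent_def\<close>)

fun ata_gen :: "nat \<Rightarrow> ata_elem" where
  "ata_gen 0 = NA" | "ata_gen (Suc 0) = NT" | "ata_gen (Suc (Suc _)) = NZ"

abbreviation ata_val :: "word \<Rightarrow> ata_elem" where
  "ata_val w \<equiv> ata_eval ata_gen w"

definition factor_of_ata :: "word \<Rightarrow> bool" where
  "factor_of_ata w \<longleftrightarrow>
     (\<exists>k. w = replicate k 0) \<or> (\<exists>k m. k \<le> 1 \<and> w = replicate k 0 @ Suc 0 # replicate m 0)"

lemma ata_val_replicate: "ata_val (replicate k 0) = a_power k"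
  by (induction k) (auto simp: a_power_def)

lemma ata_val_replicate_t:
  "ata_val (replicate k 0 @ Suc 0 # replicate m 0) = ata_mult (a_power k) (ata_mult NT (a_power m))"
  by (simp add: ata_eval_append ata_val_replicate)

lemma binary_word_cases:
  assumes "set w \<subseteq> {0, Suc 0}" "count_list w (Suc 0) \<le> 1"
  obtains k where "w = replicate k 0" | k m where "w = replicate k 0 @ Suc 0 # replicate m 0"
proof (cases "Suc 0 \<in> set w")
  case False
  with assms(1) have "\<forall>x\<in>set w. x = 0" by auto
  then show ?thesis using that(1) replicate_length_same by metis
next
  case True
  then obtain p s where w: "w = p @ Suc 0 # s" by (meson split_list)
  with assms(2) have "Suc 0 \<notin> set p" "Suc 0 \<notin> set s" by (auto simp: count_list_0_iff)
  with assms(1) w have "\<forall>x\<in>set p. x = 0" "\<forall>x\<in>set s. x = 0" by auto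
  then show ?thesis using that(2) w replicate_length_same by metis
qed

lemma ata_val_neq_NZ_iff: "ata_val w \<noteq> NZ \<longleftrightarrow> factor_of_ata w"
proof
  assume nz: "ata_val w \<noteq> NZ"
  have "set w \<subseteq> {0, Suc 0}"
  proof
    fix x assume "x \<in> set w"
    show "x \<in> {0, Suc 0}"
    proof (rule ccontr)
      assume "x \<notin> {0, Suc 0}"
      then have "ata_gen x = NZ" by (cases x rule: ata_gen.cases) auto
      with \<open>x \<in> set w\<close> nz show False using ata_eval_NZ by metis
    qed
  qed
  moreover have "count_list w (Suc 0) \<le> 1"
  proof (rule ccontr)
    assume "\<not> count_list w (Suc 0) \<le> 1"
    then have "occurs_before (\<lambda>x. x = Suc 0) (\<lambda>x. x = Suc 0) w"
      using two_le_count_list_iff[of w "Suc 0"] by linarith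
    then have "occurs_before (\<lambda>x. contains_t (ata_gen x)) (\<lambda>x. contains_t (ata_gen x)) w"
      by (rule occurs_before_mono) (simp_all add: contains_t_def)
    with nz show False using ata_eval_two_t by blast
  qed
  ultimately show "factor_of_ata w"
  proof (cases rule: binary_word_cases)
    case (2 k m)
    with nz have "k \<le> 1" by (auto simp: ata_val_replicate_t a_power_def split: if_splits)
    with 2 show ?thesis unfolding factor_of_ata_def by blast
  qed (auto simp: factor_of_ata_def)
next
  assume "factor_of_ata w"
  then show "ata_val w \<noteq> NZ"
    unfolding factor_of_ata_def
    by (auto simp: ata_val_replicate ata_val_replicate_t a_power_def split: if_splits)
qed

lemma lam_intro:
  assumes "tau1 u v" "\<forall>x. min 2 (count_list u x) = min 2 (count_list v x)"
    and "\<And>x. 2 \<le> count_list u x \<Longrightarrow> first_two_adjacent u x \<longleftrightarrow> first_two_adjacent v x"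
  shows "lam u v"
  using assms simp_mul_letters_eq_iff[of u v] unfolding lam_def by (auto simp: mul_letters_def)

lemma lam_replicate:
  assumes "min 2 i = min 2 j"
  shows "lam (replicate i 0) (replicate j 0)"
proof (cases "i = j")
  case False
  with assms obtain i' j' where ij: "i = Suc (Suc i')" "j = Suc (Suc j')"
    by (auto simp: min_def split: if_splits) (metis add_2_eq_Suc le_Suc_ex)
  have adj: "first_two_adjacent (replicate (Suc (Suc n)) 0) 0" for n
    using first_two_adjacent_append_Cons[of 0 "[]" "replicate (Suc n) 0"] by simp
  show ?thesis
  proof (rule lam_intro)
    show "tau1 (replicate i 0) (replicate j 0)"
      using tau1_replicate[of "[]" "Suc i'" 0 "[]" "Suc j'"] ij by simp
    show "\<forall>x. min 2 (count_list (replicate i 0) x) = min 2 (count_list (replicate j 0) x)"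
      using assms by simp
    fix x :: nat assume "2 \<le> count_list (replicate i 0) x"
    then have "x = 0" by (simp split: if_splits)
    then show "first_two_adjacent (replicate i 0) x \<longleftrightarrow> first_two_adjacent (replicate j 0) x"
      by (simp only: ij adj)
  qed
qed (simp add: lam_refl)

lemma lam_replicate_t:
  assumes "k \<le> 1" "min 2 (k + m) = min 2 (k + m')" "m = 0 \<longleftrightarrow> m' = 0"
  shows "lam (replicate k 0 @ Suc 0 # replicate m 0) (replicate k 0 @ Suc 0 # replicate m' 0)"
    (is "lam (?w m) (?w m')")
proof (cases "m = m'")
  case False
  with assms(3) obtain n n' where m: "m = Suc n" "m' = Suc n'" by (metis not0_implies_Suc)
  have adj: "first_two_adjacent (?w m) 0 \<longleftrightarrow> first_two_adjacent (?w m') 0"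
  proof (cases k)
    case 0
    have "first_two_adjacent (Suc 0 # replicate (Suc l) 0) 0 \<longleftrightarrow> l \<noteq> 0" for l
      using first_two_adjacent_append_Cons[of 0 "[Suc 0]" "replicate l 0"] by (cases l) auto
    with 0 m assms(2) show ?thesis by (auto simp: min_def split: if_splits)
  next
    case (Suc k')
    then have "k = 1" using assms(1) by simp
    have "\<not> first_two_adjacent (0 # Suc 0 # s) 0" for s
      using first_two_adjacent_append_Cons[of 0 "[]" "Suc 0 # s"] by simp
    with \<open>k = 1\<close> show ?thesis by simp
  qed
  show ?thesis
  proof (rule lam_intro)
    show "tau1 (?w m) (?w m')"
      using tau1_replicate[of "replicate k 0 @ [Suc 0]" n 0 "[]" n'] m by simp
    show "\<forall>x. min 2 (count_list (?w m) x) = min 2 (count_list (?w m') x)"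
      using assms(2) by simp
    fix x :: nat assume "2 \<le> count_list (?w m) x"
    then have "x = 0" by (simp split: if_splits)
    with adj show "first_two_adjacent (?w m) x \<longleftrightarrow> first_two_adjacent (?w m') x" by simp
  qed
qed (simp add: lam_refl)

lemma factor_of_ata_lam:
  assumes "factor_of_ata r" "lam r x"
  shows "factor_of_ata x \<and> ata_val x = ata_val r"
proof -
  have caps: "min 2 (count_list x y) = min 2 (count_list r y)" for y
    using lam_capped_counts[OF assms(2)] by simp
  have set: "set x = set r" and hd: "hd x = hd r"
    using tau1_set_hd assms(2) unfolding lam_def by auto
  have "set r \<subseteq> {0, Suc 0}" "count_list r (Suc 0) \<le> 1"
    using assms(1) unfolding factor_of_ata_def by auto
  then have "set x \<subseteq> {0, Suc 0}" "count_list x (Suc 0) \<le> 1"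
    using set caps[of "Suc 0"] by (auto simp: min_def split: if_splits)
  then show ?thesis
  proof (cases rule: binary_word_cases)
    case (1 k')
    then obtain k where r: "r = replicate k 0"
      using assms(1) set unfolding factor_of_ata_def by auto
    then have "min 2 k' = min 2 k" using caps[of 0] 1 by simp
    then show ?thesis using 1 r by (auto simp: factor_of_ata_def ata_val_replicate a_power_eq_iff)
  next
    case (2 k' m')
    then obtain k m where r: "k \<le> 1" "r = replicate k 0 @ Suc 0 # replicate m 0"
      using assms(1) set unfolding factor_of_ata_def by (auto dest: arg_cong[of _ _ set])
    have "k' \<le> 1"
    proof (rule ccontr)
      assume "\<not> k' \<le> 1"
      then obtain l where "k' = 2 + l" using le_Suc_ex[of 2 k'] by auto
      then have "x = 0 # 0 # replicate l 0 @ Suc 0 # replicate m' 0"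
        using 2 by (simp add: numeral_2_eq_2)
      then have "first_two_adjacent x 0" "0 \<in> mul_letters x"
        using first_two_adjacent_append_Cons[of 0 "[]"] by (auto simp: mul_letters_def)
      then have "first_two_adjacent r 0" using assms(2) unfolding lam_def by auto
      moreover have "k \<noteq> 0" using hd r 2 \<open>\<not> k' \<le> 1\<close> by (cases k; cases k') auto
      ultimately show False
        using r first_two_adjacent_append_Cons[of 0 "[]" "Suc 0 # replicate m 0"] by (cases k) auto
    qed
    moreover have "k' = 0 \<longleftrightarrow> k = 0" using hd r 2 by (cases k; cases k') auto
    ultimately have "k' = k" using r(1) by linarith
    moreover have "min 2 (k + m') = min 2 (k + m)" using caps[of 0] 2 r \<open>k' = k\<close> by simp
    moreover from this have "m' = 0 \<longleftrightarrow> m = 0" using r(1) by (auto simp: min_def split: if_splits)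
    ultimately show ?thesis
      using 2 r ata_mult_sandwich_cong[of NT k k m' m]
      by (auto simp: factor_of_ata_def ata_val_replicate_t contains_t_def)
  qed
qed

lemma lam_if_ata_val_eq:
  assumes "factor_of_ata w" "factor_of_ata z" "ata_val w = ata_val z"
  shows "lam w z"
  using assms(1)
  unfolding factor_of_ata_def
proof (elim disjE exE conjE)
  fix i assume w: "w = replicate i 0"
  show ?thesis
    using assms(2,3) w unfolding factor_of_ata_def
    by (auto simp: ata_val_replicate ata_val_replicate_t a_power_eq_iff a_power_def lam_replicate
        lam_refl split: if_splits)
next
  fix k m assume w: "k \<le> 1" "w = replicate k 0 @ Suc 0 # replicate m 0"
  from assms(2) consider j where "z = replicate j 0"
    | k' m' where "k' \<le> 1" "z = replicate k' 0 @ Suc 0 # replicate m' 0"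
    unfolding factor_of_ata_def by blast
  then show ?thesis
  proof cases
    case 1
    with w assms(3) show ?thesis
      by (auto simp: ata_val_replicate ata_val_replicate_t a_power_def split: if_splits)
  next
    case (2 k' m')
    have "ata_mult (a_power k) (ata_mult NT (a_power m)) =
        ata_mult (a_power k') (ata_mult NT (a_power m'))"
      using assms(3) w 2 by (simp only: ata_val_replicate_t)
    then have "k' = k \<and> min 2 (k + m) = min 2 (k + m') \<and> (m = 0 \<longleftrightarrow> m' = 0)"
      using w(1) 2(1) by (cases k; cases k') (auto simp: a_power_def min_def split: if_splits)
    with w 2 show ?thesis by (simp add: lam_replicate_t)
  qed
qed

lemma lfactor_ata_word_iff: "lfactor w ata_word \<longleftrightarrow> factor_of_ata w"
proof
  assume "lfactor w ata_word"
  then obtain p s where "lam ata_word (p @ w @ s)" unfolding lfactor_def by blast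
  moreover have "factor_of_ata ata_word"
    unfolding factor_of_ata_def ata_word_def by (intro disjI2 exI[of _ 1]) simp
  ultimately have "ata_val (p @ w @ s) \<noteq> NZ" using factor_of_ata_lam ata_val_neq_NZ_iff by blast
  then have "ata_val w \<noteq> NZ" by (auto simp: ata_eval_append)
  then show "factor_of_ata w" using ata_val_neq_NZ_iff by blast
next
  assume "factor_of_ata w"
  then obtain p n where "p @ w @ [0] = replicate 1 0 @ Suc 0 # replicate (Suc n) 0"
    unfolding factor_of_ata_def
  proof (elim disjE exE conjE)
    fix k assume "w = replicate k 0"
    then show thesis using that[of "[0, Suc 0]" k] by (simp add: replicate_append_same)
  next
    fix k m assume "k \<le> 1" "w = replicate k 0 @ Suc 0 # replicate m 0"
    then show thesis using that[of "replicate (1 - k) 0" m]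
      by (cases k) (simp_all add: replicate_append_same)
  qed
  moreover have "lam ata_word (replicate 1 0 @ Suc 0 # replicate (Suc n) 0)"
    using lam_replicate_t[of 1 1 "Suc n"] unfolding ata_word_def by simp
  ultimately show "lfactor w ata_word" unfolding lfactor_def by metis
qed

definition ata_class_val :: "word set option \<Rightarrow> ata_elem" where
  "ata_class_val X = (case X of None \<Rightarrow> NZ | Some S \<Rightarrow> ata_val (SOME w. w \<in> S))"

lemma Mlam_carrier_ata_word:
  "Mlam_carrier {ata_word} = insert None {Some (lclass w) | w. factor_of_ata w}"
  unfolding Mlam_carrier_def using lfactor_ata_word_iff by auto

lemma ata_class_val_lclass: "factor_of_ata w \<Longrightarrow> ata_class_val (Some (lclass w)) = ata_val w"
proof -
  assume w: "factor_of_ata w"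
  have "w \<in> lclass w" unfolding lclass_def by (simp add: lam_refl)
  then have "lam w (SOME x. x \<in> lclass w)" unfolding lclass_def by (metis mem_Collect_eq someI)
  then show ?thesis unfolding ata_class_val_def using factor_of_ata_lam[OF w] by simp
qed

lemma ata_class_val_Mlam_mult:
  assumes "X \<in> Mlam_carrier {ata_word}" "Y \<in> Mlam_carrier {ata_word}"
  shows "Mlam_mult {ata_word} X Y \<in> Mlam_carrier {ata_word} \<and>
    ata_class_val (Mlam_mult {ata_word} X Y) = ata_mult (ata_class_val X) (ata_class_val Y)"
proof (cases "X = None \<or> Y = None")
  case True
  then show ?thesis
    by (cases X; cases Y) (auto simp: Mlam_carrier_ata_word ata_class_val_def)
next
  case False
  then obtain r r' where r: "factor_of_ata r" "X = Some (lclass r)"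
    and r': "factor_of_ata r'" "Y = Some (lclass r')"
    using assms by (auto simp: Mlam_carrier_ata_word)
  define x where "x = (SOME x. x \<in> lclass r)"
  define y where "y = (SOME y. y \<in> lclass r')"
  have "ata_class_val X = ata_val x" "ata_class_val Y = ata_val y"
    unfolding x_def y_def ata_class_val_def using r r' by simp_all
  moreover have
    "Mlam_mult {ata_word} X Y = (if factor_of_ata (x @ y) then Some (lclass (x @ y)) else None)"
    using r r' lfactor_ata_word_iff by (simp add: x_def y_def)
  moreover have
    "ata_class_val (if factor_of_ata (x @ y) then Some (lclass (x @ y)) else None) =
      ata_val (x @ y)"
  proof (cases "factor_of_ata (x @ y)")
    case False
    then have "ata_val (x @ y) = NZ" using ata_val_neq_NZ_iff by blast
    with False show ?thesis by (simp add: ata_class_val_def)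
  qed (simp add: ata_class_val_lclass)
  ultimately show ?thesis by (auto simp: Mlam_carrier_ata_word ata_eval_append)
qed

lemma ata_class_val_eq_NZ_iff:
  "X \<in> Mlam_carrier {ata_word} \<Longrightarrow> ata_class_val X = NZ \<longleftrightarrow> X = None"
  using ata_class_val_lclass ata_val_neq_NZ_iff[THEN iffD2]
  by (auto simp: Mlam_carrier_ata_word ata_class_val_def)

lemma bij_betw_ata_class_val: "bij_betw ata_class_val (Mlam_carrier {ata_word}) UNIV"
  unfolding bij_betw_def
proof
  show "inj_on ata_class_val (Mlam_carrier {ata_word})"
  proof (rule inj_onI)
    fix X Y
    assume X: "X \<in> Mlam_carrier {ata_word}" and Y: "Y \<in> Mlam_carrier {ata_word}"
      and eq: "ata_class_val X = ata_class_val Y"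
    show "X = Y"
    proof (cases "X = None \<or> Y = None")
      case True
      then show ?thesis using X Y eq ata_class_val_eq_NZ_iff by metis
    next
      case False
      then obtain r r' where
        "factor_of_ata r" "X = Some (lclass r)" "factor_of_ata r'" "Y = Some (lclass r')"
        using X Y by (auto simp: Mlam_carrier_ata_word)
      with eq show ?thesis
        using ata_class_val_lclass lam_if_ata_val_eq lclass_eq_iff by metis
    qed
  qed
  show "ata_class_val ` Mlam_carrier {ata_word} = UNIV"
  proof (intro set_eqI iffI)
    fix n :: ata_elem
    have "n \<in> ata_val ` {[], [0], [0, 0], [Suc 0], [0, Suc 0], [Suc 0, 0], [Suc 0, 0, 0],
      [0, Suc 0, 0], [Suc (Suc 0)]}"
      by (cases n) simp_all
    then obtain w where w: "ata_val w = n" by blast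
    show "n \<in> ata_class_val ` Mlam_carrier {ata_word}"
    proof (cases "factor_of_ata w")
      case True
      then show ?thesis using w ata_class_val_lclass[OF True]
        by (auto simp: Mlam_carrier_ata_word intro!: image_eqI[of _ _ "Some (lclass w)"])
    next
      case False
      then have "n = ata_class_val None"
        using w ata_val_neq_NZ_iff by (auto simp: ata_class_val_def)
      then show ?thesis by (simp add: Mlam_carrier_ata_word)
    qed
  qed simp
qed

theorem Mlam_ata_word_satisfies_iff:
  "monoid_satisfies (Mlam_carrier {ata_word}) (Mlam_mult {ata_word}) Mlam_one u v \<longleftrightarrow>
     (\<forall>\<psi>. ata_eval \<psi> u = ata_eval \<psi> v)"
proof (rule monoid_satisfies_iff_isomorphic[where h = ata_class_val])
  show "\<And>X Y. X \<in> Mlam_carrier {ata_word} \<Longrightarrow> Y \<in> Mlam_carrier {ata_word} \<Longrightarrow>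
      Mlam_mult {ata_word} X Y \<in> Mlam_carrier {ata_word} \<and>
      ata_class_val (Mlam_mult {ata_word} X Y) = ata_mult (ata_class_val X) (ata_class_val Y)"
    by (rule ata_class_val_Mlam_mult)
  show "bij_betw ata_class_val (Mlam_carrier {ata_word}) UNIV" by (rule bij_betw_ata_class_val)
  have "factor_of_ata []" unfolding factor_of_ata_def by simp
  then show "Mlam_one \<in> Mlam_carrier {ata_word}" "ata_class_val Mlam_one = N1"
    unfolding Mlam_one_def by (auto simp: Mlam_carrier_ata_word ata_class_val_lclass)
qed

subsection \<open>Identities of the nine-element monoid\<close>

lemma ata_eval_indicator: "ata_eval (\<lambda>y. if y = x then NA else N1) w = a_power (count_list w x)"
  by (induction w) (auto simp: a_power_def)

lemma ata_identity_capped_counts: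
  "\<forall>\<psi>. ata_eval \<psi> u = ata_eval \<psi> v \<Longrightarrow> min 2 (count_list u x) = min 2 (count_list v x)"
  using ata_eval_indicator a_power_eq_iff by metis

lemma ata_eval_simple_multiple:
  assumes "count_list w t = 1" "2 \<le> count_list w x"
  defines "\<psi> \<equiv> \<lambda>z. if z = t then NT else if z = x then NA else N1"
  shows "ata_eval \<psi> w \<in> {NT, NTA, NTA2} \<longleftrightarrow> first_occ w t < first_occ w x"
    and "ata_eval \<psi> w \<noteq> NZ \<longleftrightarrow> first_occ w t < second_occ w x"
proof -
  have "x \<noteq> t" using assms(1,2) by auto
  have "x \<in> set w" using assms(2) by (metis count_notin not_numeral_le_zero)
  obtain w1 w2 where w: "w = w1 @ t # w2" "t \<notin> set w1" "t \<notin> set w2"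
    using split_at_simple_letter[OF assms(1)] by blast
  have "ata_eval \<psi> w' = a_power (count_list w' x)" if "t \<notin> set w'" for w'
  proof -
    have "ata_eval \<psi> w' = ata_eval (\<lambda>y. if y = x then NA else N1) w'"
      using that by (intro eval_word_cong) (auto simp: \<psi>_def)
    then show ?thesis by (simp add: ata_eval_indicator)
  qed
  then have "ata_eval \<psi> w =
      ata_mult (a_power (count_list w1 x)) (ata_mult NT (a_power (count_list w2 x)))"
    using w by (simp add: ata_eval_append \<psi>_def)
  moreover have "ata_mult (a_power a) (ata_mult NT (a_power b)) \<in> {NT, NTA, NTA2} \<longleftrightarrow> a = 0"
    and "ata_mult (a_power a) (ata_mult NT (a_power b)) \<noteq> NZ \<longleftrightarrow> \<not> 2 \<le> a" for a b
    by (auto simp: a_power_def)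
  ultimately show "ata_eval \<psi> w \<in> {NT, NTA, NTA2} \<longleftrightarrow> first_occ w t < first_occ w x"
    and "ata_eval \<psi> w \<noteq> NZ \<longleftrightarrow> first_occ w t < second_occ w x"
    using count_prefix_eq_0_iff[OF w(1,2) \<open>x \<in> set w\<close> \<open>x \<noteq> t\<close>]
      two_le_count_prefix_iff[OF w(1,2) assms(2) \<open>x \<noteq> t\<close>] by simp_all
qed

lemma ata_identity_simple_multiple:
  assumes "\<forall>\<psi>. ata_eval \<psi> u = ata_eval \<psi> v" "t \<in> simp_letters u" "x \<in> mul_letters u"
  shows "(first_occ u t < first_occ u x \<longleftrightarrow> first_occ v t < first_occ v x) \<and>
    (first_occ u t < second_occ u x \<longleftrightarrow> first_occ v t < second_occ v x)"
proof -
  have u: "count_list u t = 1" "2 \<le> count_list u x"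
    using assms(2,3) unfolding simp_letters_def mul_letters_def by auto
  moreover have "min 2 (count_list u y) = min 2 (count_list v y)" for y
    using ata_identity_capped_counts[OF assms(1)] .
  ultimately have v: "count_list v t = 1" "2 \<le> count_list v x"
    unfolding min2_eq_iff by metis+
  show ?thesis
    using ata_eval_simple_multiple[OF u] ata_eval_simple_multiple[OF v] assms(1) by metis
qed

lemma capped_count_prefix:
  assumes "w = w1 @ t # w2" "t \<notin> set w1" "y \<noteq> t"
  shows "min 2 (count_list w1 y) =
    (if y \<notin> set w \<or> first_occ w t < first_occ w y then 0
     else if count_list w y = 1 \<or> first_occ w t < second_occ w y then 1 else 2)"
proof (cases "y \<in> set w")
  case False
  then show ?thesis using assms(1) by (simp add: count_list_0_iff)
next
  case True
  have le: "count_list w1 y \<le> count_list w y" using assms(1) by simp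
  have zero: "count_list w1 y = 0 \<longleftrightarrow> first_occ w t < first_occ w y"
    by (rule count_prefix_eq_0_iff[OF assms(1,2) True assms(3)])
  show ?thesis
  proof (cases "count_list w y = 1")
    case False
    moreover have "count_list w y \<noteq> 0" using True by (simp add: count_list_0_iff)
    ultimately have "2 \<le> count_list w y" by linarith
    with True zero two_le_count_prefix_iff[OF assms(1,2) this assms(3)] show ?thesis
      by (auto simp: min_def)
  qed (use le zero True in auto)
qed

lemma capped_counts_prefix_eq:
  assumes caps: "\<forall>x. min 2 (count_list u x) = min 2 (count_list v x)"
    and order: "\<forall>x\<in>set u. \<forall>y\<in>set u. first_occ u x < last_occ u y \<longleftrightarrow> first_occ v x < last_occ v y"
    and simple_mul: "\<forall>x\<in>mul_letters u.
      (first_occ u t < first_occ u x \<longleftrightarrow> first_occ v t < first_occ v x) \<and>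
      (first_occ u t < second_occ u x \<longleftrightarrow> first_occ v t < second_occ v x)"
    and u: "u = u1 @ t # u2" "t \<notin> set u1" and v: "v = v1 @ t # v2" "t \<notin> set v1"
  shows "min 2 (count_list u1 y) = min 2 (count_list v1 y)"
proof (cases "y = t")
  case False
  have set: "set u = set v" using caps by (rule set_eq_if_capped_counts_eq)
  note prefix_u = capped_count_prefix[OF u False] and prefix_v = capped_count_prefix[OF v False]
  have "count_list u y = 0 \<or> count_list u y = 1 \<or> 2 \<le> count_list u y" by linarith
  then consider "y \<notin> set u" | "count_list u y = 1" | "y \<in> mul_letters u"
    unfolding mul_letters_def by (auto simp: count_list_0_iff)
  then show ?thesis
  proof cases
    case 1
    with set prefix_u prefix_v show ?thesis by simp
  next
    case 2
    then have cv: "count_list v y = 1" using caps unfolding min2_eq_iff by blast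
    have yu: "y \<in> set u" using 2 by (metis count_notin zero_neq_one)
    have "first_occ u t < first_occ u y \<longleftrightarrow> first_occ v t < first_occ v y"
      using order[rule_format, of t y] yu u(1)
        last_occ_eq_first_occ[OF 2] last_occ_eq_first_occ[OF cv]
      by simp
    with yu set 2 cv prefix_u prefix_v show ?thesis by simp
  next
    case 3
    then have "2 \<le> count_list u y" "2 \<le> count_list v y"
      using caps min2_eq_iff unfolding mul_letters_def by auto
    moreover have "y \<in> set u" using 3 unfolding mul_letters_def
      by (metis count_notin mem_Collect_eq not_numeral_le_zero)
    ultimately show ?thesis using 3 simple_mul set prefix_u prefix_v by auto
  qed
qed (use u v in \<open>simp add: count_list_0_iff\<close>)

lemma set_suffix_eq:
  assumes set: "set u = set v"
    and order: "\<forall>x\<in>set u. \<forall>y\<in>set u. first_occ u x < last_occ u y \<longleftrightarrow> first_occ v x < last_occ v y"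
    and u: "u = u1 @ t # u2" "t \<notin> set u1" and v: "v = v1 @ t # v2" "t \<notin> set v1"
  shows "set u2 = set v2"
proof (intro set_eqI)
  fix y
  show "y \<in> set u2 \<longleftrightarrow> y \<in> set v2"
  proof (cases "y \<in> set u")
    case True
    then have "t \<in> set u" "y \<in> set v" using u(1) set by auto
    with True show ?thesis
      using in_set_suffix_iff[OF u True] in_set_suffix_iff[OF v] order by simp
  next
    case False
    then show ?thesis using u(1) v(1) set by auto
  qed
qed

lemma ata_identity_if_unique_t:
  assumes caps: "\<forall>x. min 2 (count_list u x) = min 2 (count_list v x)"
    and order: "\<forall>x\<in>set u. \<forall>y\<in>set u. first_occ u x < last_occ u y \<longleftrightarrow> first_occ v x < last_occ v y"
    and simple_mul: "\<forall>x\<in>mul_letters u.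
      (first_occ u t < first_occ u x \<longleftrightarrow> first_occ v t < first_occ v x) \<and>
      (first_occ u t < second_occ u x \<longleftrightarrow> first_occ v t < second_occ v x)"
    and t: "count_list u t = 1" "contains_t (\<psi> t)"
    and others: "\<forall>y\<in>set u. y \<noteq> t \<longrightarrow> \<not> contains_t (\<psi> y) \<and> \<psi> y \<noteq> NZ"
  shows "ata_eval \<psi> u = ata_eval \<psi> v"
proof -
  have set: "set u = set v" using caps by (rule set_eq_if_capped_counts_eq)
  have "count_list v t = 1" using caps t(1) unfolding min2_eq_iff by blast
  obtain u1 u2 where u: "u = u1 @ t # u2" "t \<notin> set u1" "t \<notin> set u2"
    using split_at_simple_letter[OF t(1)] by blast
  obtain v1 v2 where v: "v = v1 @ t # v2" "t \<notin> set v1" "t \<notin> set v2"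
    using split_at_simple_letter[OF \<open>count_list v t = 1\<close>] by blast
  let ?\<Sigma> = "\<lambda>w. \<Sum>y\<leftarrow>w. a_exponent (\<psi> y)"
  have eval: "ata_eval \<psi> w = ata_mult (a_power (?\<Sigma> w1)) (ata_mult (\<psi> t) (a_power (?\<Sigma> w2)))"
    if "w = w1 @ t # w2" "t \<notin> set w1" "t \<notin> set w2" "set w = set u" for w w1 w2
  proof -
    have "\<forall>y\<in>set w1 \<union> set w2. \<not> contains_t (\<psi> y) \<and> \<psi> y \<noteq> NZ" using that others by auto
    then show ?thesis using that(1) by (simp add: ata_eval_append ata_eval_without_t)
  qed
  have "min 2 (?\<Sigma> u1) = min 2 (?\<Sigma> v1)"
    using capped_counts_prefix_eq[OF caps order simple_mul u(1,2) v(1,2)]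
    by (intro min2_sum_list_cong allI)
  moreover have "a_exponent (\<psi> t) = 0" using t(2) by (cases "\<psi> t") (auto simp: contains_t_def)
  then have "min 2 (?\<Sigma> u1 + ?\<Sigma> u2) = min 2 (?\<Sigma> v1 + ?\<Sigma> v2)"
    using min2_sum_list_cong[OF caps, of "\<lambda>y. a_exponent (\<psi> y)"] u(1) v(1) by simp
  moreover have "?\<Sigma> u2 = 0 \<longleftrightarrow> ?\<Sigma> v2 = 0"
    using set_suffix_eq[OF set order u(1,2) v(1,2)] by simp
  ultimately have "ata_mult (a_power (?\<Sigma> u1)) (ata_mult (\<psi> t) (a_power (?\<Sigma> u2))) =
      ata_mult (a_power (?\<Sigma> v1)) (ata_mult (\<psi> t) (a_power (?\<Sigma> v2)))"
    by (rule ata_mult_sandwich_cong[OF t(2)])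
  then show ?thesis using eval[OF u] eval[OF v] set by simp
qed

lemma ata_identity_if:
  assumes caps: "\<forall>x. min 2 (count_list u x) = min 2 (count_list v x)"
    and order: "\<forall>x\<in>set u. \<forall>y\<in>set u. first_occ u x < last_occ u y \<longleftrightarrow> first_occ v x < last_occ v y"
    and simple_mul: "\<forall>t\<in>simp_letters u. \<forall>x\<in>mul_letters u.
      (first_occ u t < first_occ u x \<longleftrightarrow> first_occ v t < first_occ v x) \<and>
      (first_occ u t < second_occ u x \<longleftrightarrow> first_occ v t < second_occ v x)"
  shows "ata_eval \<psi> u = ata_eval \<psi> v"
proof -
  have set: "set u = set v" using caps by (rule set_eq_if_capped_counts_eq)
  let ?T = "\<lambda>x. contains_t (\<psi> x)"
  consider (zero) x where "x \<in> set u" "\<psi> x = NZ"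
    | (two_t) "occurs_before ?T ?T u"
    | (no_t) "\<forall>x\<in>set u. \<not> ?T x \<and> \<psi> x \<noteq> NZ"
    | (one_t) t where "count_list u t = 1" "?T t" "\<forall>y\<in>set u. y \<noteq> t \<longrightarrow> \<not> ?T y \<and> \<psi> y \<noteq> NZ"
  proof (cases "(\<exists>x\<in>set u. \<psi> x = NZ) \<or> occurs_before ?T ?T u \<or> (\<forall>x\<in>set u. \<not> ?T x)")
    case False
    then obtain t where t: "t \<in> set u" "?T t" and nz: "\<forall>x\<in>set u. \<psi> x \<noteq> NZ"
      and not2: "\<not> occurs_before ?T ?T u" by blast
    have "\<not> 2 \<le> count_list u t"
      using not2 two_le_count_list_iff occurs_before_mono[of _ _ u ?T ?T] t(2) by blast
    moreover have "count_list u t \<noteq> 0" using t(1) by (simp add: count_list_0_iff)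
    ultimately have "count_list u t = 1" by linarith
    moreover have "\<forall>y\<in>set u. y \<noteq> t \<longrightarrow> \<not> ?T y"
      using not2 t occurs_before_distinct[of _ u t ?T] by blast
    ultimately show ?thesis using that(4) t(2) nz by blast
  qed (use that in blast)+
  then show ?thesis
  proof cases
    case zero
    then show ?thesis using set ata_eval_NZ by metis
  next
    case two_t
    then show ?thesis using ata_eval_two_t occurs_before_eq_if_order_eq[OF set order] by metis
  next
    case no_t
    then show ?thesis using ata_eval_without_t_cong caps by blast
  next
    case (one_t t)
    moreover from one_t(1) have "t \<in> simp_letters u" by (simp add: simp_letters_def)
    ultimately show ?thesis
      using ata_identity_if_unique_t[OF caps order] simple_mul by blast
  qed
qed

lemma join_A01_Mata_satisfies_iff:
  "join_A01_Mata_satisfies u v \<longleftrightarrow>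
     monoid_satisfies UNIV a01_mult One u v \<and> (\<forall>\<psi>. ata_eval \<psi> u = ata_eval \<psi> v)"
  unfolding join_A01_Mata_satisfies_def Mlam_ata_word_satisfies_iff ..

theorem lemma6p2:
  fixes u v :: word
  shows "join_A01_Mata_satisfies u v \<longleftrightarrow>
    (simp_letters u = simp_letters v \<and> mul_letters u = mul_letters v) \<and>
    (\<forall>x\<in>set u. \<forall>y\<in>set u.
       first_occ u x < last_occ u y \<longleftrightarrow> first_occ v x < last_occ v y) \<and>
    (\<forall>t\<in>simp_letters u. \<forall>x\<in>mul_letters u.
       (first_occ u t < first_occ u x \<longleftrightarrow> first_occ v t < first_occ v x) \<and>
       (first_occ u t < second_occ u x \<longleftrightarrow> first_occ v t < second_occ v x))"
  (is "_ \<longleftrightarrow> ?letters \<and> ?order \<and> ?simple_mul")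
proof
  assume "join_A01_Mata_satisfies u v"
  then have A01: "monoid_satisfies UNIV a01_mult One u v"
    and ata: "\<forall>\<psi>. ata_eval \<psi> u = ata_eval \<psi> v"
    by (simp_all add: join_A01_Mata_satisfies_iff)
  have ?letters
    using ata_identity_capped_counts[OF ata] simp_mul_letters_eq_iff by blast
  moreover have ?order using A01 A01_satisfies_iff by blast
  moreover have ?simple_mul using ata_identity_simple_multiple[OF ata] by blast
  ultimately show "?letters \<and> ?order \<and> ?simple_mul" by blast
next
  assume conds: "?letters \<and> ?order \<and> ?simple_mul"
  then have caps: "\<forall>x. min 2 (count_list u x) = min 2 (count_list v x)"
    using simp_mul_letters_eq_iff by blast
  then have "monoid_satisfies UNIV a01_mult One u v"
    using conds A01_satisfies_iff set_eq_if_capped_counts_eq by blast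
  moreover have "\<forall>\<psi>. ata_eval \<psi> u = ata_eval \<psi> v"
    using ata_identity_if[OF caps] conds by blast
  ultimately show "join_A01_Mata_satisfies u v" by (simp add: join_A01_Mata_satisfies_iff)
qed

end
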